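(* Let $d>k\ge 0$ be integers. Then $f(k,d)\le \frac{k+2}{d+3}$.
   Context: For a graph $G=(V,E)$ and an integer $k\ge 0$, a $k$-independent set is a set $S\subseteq V$ such that the induced subgraph $G[S]$ has maximum degree at most $k$; $\alpha_k(G)$ denotes the maximum cardinality of a $k$-independent set of $G$. $n(G)$ is the number of vertices and $d(G)=2|E(G)|/n(G)$ the average degree. For integers $d,k\ge 0$, $f(k,d)=\inf\left\{\frac{\alpha_k(G)}{n(G)} : G \text{ a finite simple graph with at least one vertex and } d(G)\le d\right\}$. *)

theory Defs
  imports Complex_Main
begin

text \<open>Vertices are drawn from nat; every finite simple graph
  is isomorphic to one of this form, so the infimum is unaffected.\<close>

definition simple_graph :: "nat set \<Rightarrow> nat set set \<Rightarrow> bool" where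
  "simple_graph V E \<longleftrightarrow> finite V \<and> (\<forall>e\<in>E. e \<subseteq> V \<and> card e = 2)"

definition k_independent :: "nat set set \<Rightarrow> nat \<Rightarrow> nat set \<Rightarrow> bool" where
  "k_independent E k S \<longleftrightarrow>
     (\<forall>v\<in>S. card {u\<in>S. {u, v} \<in> E} \<le> k)"

definition alpha_k :: "nat set \<Rightarrow> nat set set \<Rightarrow> nat \<Rightarrow> nat" where
  "alpha_k V E k = Max {card S | S. S \<subseteq> V \<and> k_independent E k S}"

definition avg_degree :: "nat set \<Rightarrow> nat set set \<Rightarrow> real" where
  "avg_degree V E = 2 * real (card E) / real (card V)"

definition f_kd :: "nat \<Rightarrow> nat \<Rightarrow> real" where
  "f_kd k d = Inf {real (alpha_k V E k) / real (card V) | V E.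
                    simple_graph V E \<and> V \<noteq> {} \<and> avg_degree V E \<le> real d}"

end

theory Submission
  imports Defs
begin

(* Upper bound f(k,d) <= (k+2)/(d+3) for d > k, via one explicit graph: the
   complement of the cycle C_n on the vertices 0,...,n-1, with n = d + 3.

   This graph is (n-3)-regular, so its average degree is exactly d.  A set S
   that is k-independent has at most k+2 vertices: if S is the whole vertex set,
   every vertex has n - 3 = d > k neighbours in S; otherwise some vertex v of S
   has no cycle-predecessor in S (a nonempty set closed under the cyclic
   successor is everything), so v misses in S only itself and its successor and
   thus has at least |S| - 2 neighbours in S. *)

definition cyc_succ :: "nat \<Rightarrow> nat \<Rightarrow> nat" where
  "cyc_succ n i = Suc i mod n"

lemma cyc_succ_less: "0 < n \<Longrightarrow> cyc_succ n i < n"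
  by (simp add: cyc_succ_def)

lemma mod_shift_neq:
  fixes i j n :: nat
  assumes "0 < j" "j < n"
  shows "(i + j) mod n \<noteq> i mod n"
proof
  assume "(i + j) mod n = i mod n"
  then have "n dvd j" using mod_eq_dvd_iff_nat[of i "i + j" n] by simp
  then show False using assms by (auto dest: dvd_imp_le)
qed

lemma cyc_succ_neq: "2 \<le> n \<Longrightarrow> i < n \<Longrightarrow> cyc_succ n i \<noteq> i"
  using mod_shift_neq[of 1 n i] by (simp add: cyc_succ_def)

lemma cyc_succ_twice_neq: "3 \<le> n \<Longrightarrow> i < n \<Longrightarrow> cyc_succ n (cyc_succ n i) \<noteq> i"
  using mod_shift_neq[of 2 n i] by (simp add: cyc_succ_def mod_Suc_eq)

lemma inj_on_cyc_succ: "inj_on (cyc_succ n) {0..<n}"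
  by (auto simp: inj_on_def cyc_succ_def mod_Suc split: if_splits)

lemma cyc_succ_iterate: "cyc_succ n ((s + j) mod n) = (s + Suc j) mod n"
  by (simp add: cyc_succ_def mod_Suc_eq)

text \<open>Otherwise the successor map would send S onto itself, and a
  set closed under the successor contains every vertex.\<close>
lemma vertex_without_predecessor:
  assumes S: "S \<subseteq> {0..<n}" "S \<noteq> {}" "S \<noteq> {0..<n}"
  shows "\<exists>v\<in>S. \<forall>u\<in>S. cyc_succ n u \<noteq> v"
proof (rule ccontr)
  assume "\<not> ?thesis"
  then have S_in_image: "S \<subseteq> cyc_succ n ` S" by fastforce
  have fin: "finite S" using S(1) finite_subset by blast
  have "cyc_succ n ` S = S"
    using card_seteq[OF finite_imageI[OF fin] S_in_image card_image_le[OF fin]] by simp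
  then have closed: "cyc_succ n u \<in> S" if "u \<in> S" for u using that by blast
  obtain s where s: "s \<in> S" using S(2) by blast
  have orbit: "(s + j) mod n \<in> S" for j
  proof (induction j)
    case 0
    show ?case using s S(1) by auto
  next
    case (Suc j)
    then show ?case using closed cyc_succ_iterate by metis
  qed
  have "w \<in> S" if w: "w < n" for w
  proof -
    have "s < n" using s S(1) by auto
    then have "(s + (n - s + w)) mod n = w" using w by (simp add: mod_add_self1)
    then show ?thesis using orbit by metis
  qed
  then have "{0..<n} \<subseteq> S" by auto
  then show False using S(1,3) by blast
qed

definition pairs :: "nat set \<Rightarrow> nat set set" where
  "pairs V = {e. e \<subseteq> V \<and> card e = 2}"

definition cycle_edges :: "nat \<Rightarrow> nat set set" where
  "cycle_edges n = (\<lambda>i. {i, cyc_succ n i}) ` {0..<n}"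

definition cocycle :: "nat \<Rightarrow> nat set set" where
  "cocycle n = pairs {0..<n} - cycle_edges n"

lemma card_pairs: "finite V \<Longrightarrow> card (pairs V) = card V choose 2"
  unfolding pairs_def using n_subsets by blast

lemma cycle_edges_subset_pairs:
  "2 \<le> n \<Longrightarrow> cycle_edges n \<subseteq> pairs {0..<n}"
  unfolding cycle_edges_def pairs_def using cyc_succ_neq cyc_succ_less by fastforce

lemma card_cycle_edges:
  assumes "3 \<le> n"
  shows "card (cycle_edges n) = n"
proof -
  have "inj_on (\<lambda>i. {i, cyc_succ n i}) {0..<n}"
  proof (rule inj_onI)
    fix i j assume i: "i \<in> {0..<n}" and "j \<in> {0..<n}"
      and eq: "{i, cyc_succ n i} = {j, cyc_succ n j}"
    show "i = j"
    proof (rule ccontr)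
      assume "i \<noteq> j"
      then have "cyc_succ n (cyc_succ n i) = i" using eq by (auto simp: doubleton_eq_iff)
      moreover have "i < n" using i by simp
      ultimately show False using cyc_succ_twice_neq[OF assms] by metis
    qed
  qed
  then show ?thesis unfolding cycle_edges_def by (simp add: card_image)
qed

lemma simple_graph_cocycle: "simple_graph {0..<n} (cocycle n)"
  unfolding simple_graph_def cocycle_def pairs_def by auto

text \<open>The complement of C_n is (n-3)-regular, so its average degree is n - 3.\<close>
lemma avg_degree_cocycle:
  assumes n: "3 \<le> n"
  shows "avg_degree {0..<n} (cocycle n) = real (n - 3)"
proof -
  have sub: "cycle_edges n \<subseteq> pairs {0..<n}" using cycle_edges_subset_pairs n by simp
  have "finite (pairs {0..<n})" unfolding pairs_def by simp
  then have "card (cocycle n) = card (pairs {0..<n}) - card (cycle_edges n)"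
    unfolding cocycle_def using card_Diff_subset finite_subset sub by metis
  then have "card (cocycle n) = (n choose 2) - n"
    using card_cycle_edges[OF n] card_pairs[of "{0..<n}"] by simp
  moreover have "2 * (n choose 2) = n * (n - 1)"
  proof -
    have "even (n * (n - 1))" by (cases "even n") auto
    then show ?thesis unfolding choose_two by simp
  qed
  ultimately have "2 * card (cocycle n) = n * (n - 3)"
    using n by (simp add: diff_mult_distrib2 algebra_simps)
  then have "2 * real (card (cocycle n)) = real n * real (n - 3)"
    by (metis of_nat_mult of_nat_numeral)
  then show ?thesis unfolding avg_degree_def using n by (simp add: field_simps)
qed

lemma cocycle_adjacent:
  assumes "u < n" "v < n" "u \<noteq> v" "v \<noteq> cyc_succ n u" "u \<noteq> cyc_succ n v"
  shows "{u, v} \<in> cocycle n"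
proof -
  have "{u, v} \<notin> cycle_edges n"
    unfolding cycle_edges_def using assms(4,5) by (auto simp: doubleton_eq_iff)
  then show ?thesis unfolding cocycle_def pairs_def using assms(1-3) by auto
qed

lemma cocycle_degree_lower:
  assumes S: "S \<subseteq> {0..<n}" and v: "v \<in> S"
  shows "card S \<le> card {u\<in>S. {u, v} \<in> cocycle n} + 2 + card {u\<in>S. cyc_succ n u = v}"
proof -
  let ?N = "{u\<in>S. {u, v} \<in> cocycle n}" and ?P = "{u\<in>S. cyc_succ n u = v}"
  have fin: "finite S" using S finite_subset by blast
  have "S \<subseteq> ?N \<union> {v, cyc_succ n v} \<union> ?P"
  proof
    fix u assume u: "u \<in> S"
    show "u \<in> ?N \<union> {v, cyc_succ n v} \<union> ?P"
    proof (cases "u = v \<or> u = cyc_succ n v \<or> cyc_succ n u = v")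
      case True
      then show ?thesis using u by auto
    next
      case False
      then have "{u, v} \<in> cocycle n" using u v S by (intro cocycle_adjacent) auto
      then show ?thesis using u by blast
    qed
  qed
  then have "card S \<le> card (?N \<union> {v, cyc_succ n v} \<union> ?P)"
    using fin by (intro card_mono) auto
  also have "\<dots> \<le> card ?N + card {v, cyc_succ n v} + card ?P"
    using card_Un_le[of "?N \<union> {v, cyc_succ n v}" ?P] card_Un_le[of ?N "{v, cyc_succ n v}"]
    by linarith
  also have "card {v, cyc_succ n v} \<le> 2"
    by (simp add: card_insert_le_m1)
  finally show ?thesis by linarith
qed

lemma cocycle_k_independent_card:
  assumes n: "k + 3 < n" and S: "S \<subseteq> {0..<n}" and indep: "k_independent (cocycle n) k S"
  shows "card S \<le> k + 2"
proof -
  have deg: "card {u\<in>S. {u, v} \<in> cocycle n} \<le> k" if "v \<in> S" for v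
    using indep that unfolding k_independent_def by blast
  consider "S = {}" | "S = {0..<n}" | "S \<noteq> {}" "S \<noteq> {0..<n}" by blast
  then show ?thesis
  proof cases
    case 1
    then show ?thesis by simp
  next
    case 2
    text \<open>A vertex has at most one predecessor, so n \<le> k + 3, a contradiction.\<close>
    have "0 \<in> S" using 2 n by simp
    have "card {u\<in>S. cyc_succ n u = 0} \<le> 1"
      using inj_on_cyc_succ[of n] 2 by (auto simp: card_le_Suc0_iff_eq inj_on_def)
    then have "n \<le> k + 3"
      using cocycle_degree_lower[OF S \<open>0 \<in> S\<close>] deg[OF \<open>0 \<in> S\<close>] 2 by simp
    then show ?thesis using n by simp
  next
    case 3
    obtain v where v: "v \<in> S" "\<forall>u\<in>S. cyc_succ n u \<noteq> v"
      using vertex_without_predecessor[OF S 3] by blast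
    then have "{u\<in>S. cyc_succ n u = v} = {}" by blast
    then have "card {u\<in>S. cyc_succ n u = v} = 0" by (simp only: card.empty)
    then show ?thesis using cocycle_degree_lower[OF S v(1)] deg[OF v(1)] by linarith
  qed
qed

lemma alpha_k_le:
  assumes "finite V" and bound: "\<And>S. S \<subseteq> V \<Longrightarrow> k_independent E k S \<Longrightarrow> card S \<le> m"
  shows "alpha_k V E k \<le> m"
proof -
  let ?A = "{card S | S. S \<subseteq> V \<and> k_independent E k S}"
  have "?A \<subseteq> card ` Pow V" by auto
  then have "finite ?A" using assms(1) finite_subset by blast
  moreover have "k_independent E k {}" unfolding k_independent_def by simp
  then have "card ({} :: nat set) \<in> ?A" by blast
  ultimately show ?thesis unfolding alpha_k_def using bound by (subst Max_le_iff) auto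
qed

lemma f_kd_le_witness:
  assumes "simple_graph V E" "V \<noteq> {}" "avg_degree V E \<le> real d"
  shows "f_kd k d \<le> real (alpha_k V E k) / real (card V)"
  unfolding f_kd_def
proof (rule cInf_lower)
  show "real (alpha_k V E k) / real (card V) \<in> {real (alpha_k V E k) / real (card V) | V E.
          simple_graph V E \<and> V \<noteq> {} \<and> avg_degree V E \<le> real d}"
    using assms by blast
  show "bdd_below {real (alpha_k V E k) / real (card V) | V E.
          simple_graph V E \<and> V \<noteq> {} \<and> avg_degree V E \<le> real d}"
    by (rule bdd_belowI[of _ 0]) auto
qed

theorem mainTheorem10:
  fixes k d :: nat
  assumes "d > k"
  shows "f_kd k d \<le> real (k + 2) / real (d + 3)"
proof -
  define n where "n = d + 3"
  have nonempty: "{0..<n} \<noteq> {}" by (simp add: n_def)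
  have avg: "avg_degree {0..<n} (cocycle n) \<le> real d"
    using avg_degree_cocycle[of n] by (simp add: n_def)
  have alpha: "alpha_k {0..<n} (cocycle n) k \<le> k + 2"
    using assms by (intro alpha_k_le cocycle_k_independent_card) (simp_all add: n_def)
  have "f_kd k d \<le> real (alpha_k {0..<n} (cocycle n) k) / real n"
    using f_kd_le_witness[OF simple_graph_cocycle nonempty avg] by simp
  also have "\<dots> \<le> real (k + 2) / real n"
    using alpha by (simp add: divide_right_mono)
  finally show ?thesis by (simp add: n_def)
qed

end
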